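(* The space $\mathcal O_2$ is homotopy equivalent to the circle $S^1$.
   Context: A polynomial knot is a map $\phi:\mathbb R\to\mathbb R^3$ with real polynomial components which is a smooth embedding ($\phi$ injective and $\phi'(t)\neq0$ for all $t$). $\mathcal A_2$ is the set of polynomial maps $t\mapsto(a_0,\ b_0+b_1t,\ c_0+c_1t+c_2t^2)$ with $(a_0,b_0,b_1,c_0,c_1,c_2)\in\mathbb R^6$ arbitrary, topologized by identifying it with $\mathbb R^6$ via its coefficient vector. $\mathcal O_2$ is the subspace of $\mathcal A_2$ consisting of polynomial knots. *)

theory Defs
  imports "HOL-Analysis.Analysis" "HOL-Computational_Algebra.Polynomial"
begin

definition polynomial_knot :: "(real \<Rightarrow> real \<times> real \<times> real) \<Rightarrow> bool" where
  "polynomial_knot \<phi> \<longleftrightarrow>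
     (\<exists>p q r :: real poly. \<phi> = (\<lambda>t. (poly p t, poly q t, poly r t))) \<and>
     inj \<phi> \<and>
     (\<forall>t. \<exists>v. (\<phi> has_vector_derivative v) (at t) \<and> v \<noteq> 0)"

definition A2_map :: "real \<times> real \<times> real \<times> real \<times> real \<times> real \<Rightarrow> real \<Rightarrow> real \<times> real \<times> real" where
  "A2_map = (\<lambda>(a0, b0, b1, c0, c1, c2) t. (a0, b0 + b1 * t, c0 + c1 * t + c2 * t^2))"

definition O2 :: "(real \<times> real \<times> real \<times> real \<times> real \<times> real) set" where
  "O2 = {x. polynomial_knot (A2_map x)}"

end

theory Submission
  imports Defs
begin

text \<open>A map in \<open>\<A>\<^sub>2\<close> is injective exactly when its linear second component is nonconstant
  or its third component is a nonconstant linear function, and it is then automatically an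
  immersion. So \<open>\<O>\<^sub>2\<close> is cut out by \<open>b\<^sub>1 \<noteq> 0 \<or> (c\<^sub>2 = 0 \<and> c\<^sub>1 \<noteq> 0)\<close>. The straight lines
  \<open>t \<mapsto> (0, t Re z, t Im z)\<close> with \<open>|z| = 1\<close> form a circle in \<open>\<O>\<^sub>2\<close>, and the straight-line
  homotopy from a knot to the line in the direction \<open>(b\<^sub>1, c\<^sub>1)\<close> only rescales its coefficients,
  the linear ones by positive factors, so it stays inside \<open>\<O>\<^sub>2\<close>.\<close>

lemma homotopy_eqv_by_straight_line_deformation:
  fixes S :: "'a::real_normed_vector set" and T :: "'b::real_normed_vector set"
  assumes r: "continuous_on S r" "r ` S \<subseteq> T"
    and s: "continuous_on T s" "s ` T \<subseteq> S"
    and r_s: "\<And>y. y \<in> T \<Longrightarrow> r (s y) = y"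
    and segment: "\<And>x. x \<in> S \<Longrightarrow> closed_segment (s (r x)) x \<subseteq> S"
  shows "S homotopy_eqv T"
proof (rule deformation_retraction_imp_homotopy_equivalent_space)
  show "retraction_maps (top_of_set S) (top_of_set T) r s"
    using r s r_s by (auto simp: retraction_maps_def continuous_map_subtopology_eu)
  have "continuous_on S (s \<circ> r)"
    using r s by (meson continuous_on_compose continuous_on_subset)
  then show "homotopic_with (\<lambda>x. True) (top_of_set S) (top_of_set S) (s \<circ> r) id"
    using segment by (intro homotopic_with_linear) auto
qed

lemma inj_quadratic_iff:
  "inj (\<lambda>t::real. c0 + c1 * t + c2 * t^2) \<longleftrightarrow> c2 = 0 \<and> c1 \<noteq> 0"
proof
  assume inj: "inj (\<lambda>t::real. c0 + c1 * t + c2 * t^2)"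
  show "c2 = 0 \<and> c1 \<noteq> 0"
  proof (rule ccontr)
    assume "\<not> (c2 = 0 \<and> c1 \<noteq> 0)"
    then consider "c2 = 0" "c1 = 0" | "c2 \<noteq> 0" by blast
    then show False
    proof cases
      case 1
      then show False using injD[OF inj, of 0 1] by simp
    next
      case 2
      \<comment> \<open>a parabola takes equal values at points symmetric about its vertex\<close>
      define v where "v = -c1 / (2 * c2)"
      have "c0 + c1 * (v + 1) + c2 * (v + 1)^2 = c0 + c1 * (v - 1) + c2 * (v - 1)^2"
        using 2 by (simp add: v_def field_simps power2_eq_square)
      then have "v + 1 = v - 1" by (rule injD[OF inj])
      then show False by simp
    qed
  qed
next
  assume "c2 = 0 \<and> c1 \<noteq> 0"
  then show "inj (\<lambda>t::real. c0 + c1 * t + c2 * t^2)"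
    by (simp add: inj_def)
qed

lemma A2_map_has_vector_derivative:
  "(A2_map (a0, b0, b1, c0, c1, c2) has_vector_derivative (0, b1, c1 + 2 * c2 * t)) (at t)"
  unfolding A2_map_def
  by (auto intro!: has_vector_derivative_Pair derivative_eq_intros
      simp: has_real_derivative_iff_has_vector_derivative[symmetric])

lemma A2_map_polynomial:
  "A2_map (a0, b0, b1, c0, c1, c2) = (\<lambda>t. (poly [:a0:] t, poly [:b0, b1:] t, poly [:c0, c1, c2:] t))"
  by (auto simp: A2_map_def power2_eq_square algebra_simps)

lemma O2_iff: "(a0, b0, b1, c0, c1, c2) \<in> O2 \<longleftrightarrow> b1 \<noteq> 0 \<or> (c2 = 0 \<and> c1 \<noteq> 0)"
proof -
  have inj_iff: "inj (A2_map (a0, b0, b1, c0, c1, c2)) \<longleftrightarrow>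
      b1 \<noteq> 0 \<or> inj (\<lambda>t::real. c0 + c1 * t + c2 * t^2)"
    by (auto simp: A2_map_def inj_def)
  have "(0, b1, c1 + 2 * c2 * t) \<noteq> (0::real \<times> real \<times> real)" if "b1 \<noteq> 0 \<or> (c2 = 0 \<and> c1 \<noteq> 0)" for t
    using that by (auto simp: zero_prod_def)
  then show ?thesis
    unfolding O2_def mem_Collect_eq polynomial_knot_def inj_iff inj_quadratic_iff
    using A2_map_polynomial A2_map_has_vector_derivative by blast
qed

definition linear_coeffs :: "real \<times> real \<times> real \<times> real \<times> real \<times> real \<Rightarrow> complex" where
  "linear_coeffs x = Complex (fst (snd (snd x))) (fst (snd (snd (snd (snd x)))))"

lemma linear_coeffs [simp]: "linear_coeffs (a0, b0, b1, c0, c1, c2) = Complex b1 c1"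
  by (simp add: linear_coeffs_def)

lemma continuous_on_linear_coeffs: "continuous_on S linear_coeffs"
  unfolding linear_coeffs_def by (intro continuous_intros)

lemma linear_coeffs_nonzero_if_O2: "x \<in> O2 \<Longrightarrow> linear_coeffs x \<noteq> 0"
  by (cases x) (auto simp: O2_iff complex_eq_iff)

definition line_coeffs :: "complex \<Rightarrow> real \<times> real \<times> real \<times> real \<times> real \<times> real" where
  "line_coeffs z = (0, 0, Re z, 0, Im z, 0)"

lemma continuous_on_line_coeffs: "continuous_on S line_coeffs"
  unfolding line_coeffs_def by (intro continuous_intros)

lemma line_coeffs_in_O2: "z \<noteq> 0 \<Longrightarrow> line_coeffs z \<in> O2"
  by (auto simp: line_coeffs_def O2_iff complex_eq_iff)

lemma linear_coeffs_line_coeffs [simp]: "linear_coeffs (line_coeffs z) = z"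
  by (simp add: line_coeffs_def)

lemma O2_scale:
  assumes "(a0, b0, b1, c0, c1, c2) \<in> O2" "k > 0"
  shows "(u * a0, u * b0, k * b1, u * c0, k * c1, u * c2) \<in> O2"
  using assms by (auto simp: O2_iff)

lemma closed_segment_line_coeffs_sgn_subset_O2:
  assumes x: "x \<in> O2"
  shows "closed_segment (line_coeffs (sgn (linear_coeffs x))) x \<subseteq> O2"
proof
  fix y assume "y \<in> closed_segment (line_coeffs (sgn (linear_coeffs x))) x"
  then obtain u where u: "0 \<le> u" "u \<le> 1"
    and y: "y = (1 - u) *\<^sub>R line_coeffs (sgn (linear_coeffs x)) + u *\<^sub>R x"
    unfolding closed_segment_def by auto
  obtain a0 b0 b1 c0 c1 c2 where x_eq: "x = (a0, b0, b1, c0, c1, c2)"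
    by (cases x) auto
  define n where "n = norm (linear_coeffs x)"
  have "n > 0"
    using linear_coeffs_nonzero_if_O2[OF x] by (simp add: n_def)
  then have "(1 - u) / n + u > 0"
    using u by (cases "u = 0") (auto intro: add_nonneg_pos add_pos_nonneg)
  moreover have "y = (u * a0, u * b0, ((1 - u) / n + u) * b1, u * c0, ((1 - u) / n + u) * c1, u * c2)"
    by (simp add: y x_eq n_def line_coeffs_def sgn_div_norm field_simps)
  ultimately show "y \<in> O2"
    using O2_scale x x_eq by simp
qed

theorem mainTheorem3:
  shows "O2 homotopy_eqv sphere (0::complex) 1"
proof (rule homotopy_eqv_by_straight_line_deformation)
  show "continuous_on O2 (sgn \<circ> linear_coeffs)"
    using linear_coeffs_nonzero_if_O2 by (intro continuous_intros continuous_on_linear_coeffs) auto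
  show "(sgn \<circ> linear_coeffs) ` O2 \<subseteq> sphere 0 1"
    using linear_coeffs_nonzero_if_O2 by (auto simp: norm_sgn)
  show "line_coeffs ` sphere 0 1 \<subseteq> O2"
    by (intro image_subsetI line_coeffs_in_O2) auto
  show "continuous_on (sphere 0 1) line_coeffs"
    by (rule continuous_on_line_coeffs)
  show "(sgn \<circ> linear_coeffs) (line_coeffs z) = z" if "z \<in> sphere 0 1" for z
    using that by (simp add: sgn_div_norm)
  show "closed_segment (line_coeffs ((sgn \<circ> linear_coeffs) x)) x \<subseteq> O2" if "x \<in> O2" for x
    using closed_segment_line_coeffs_sgn_subset_O2[OF that] by simp
qed

end
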